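(* Let $n\ge 2$ and let $\mathsf u$ be a subword of $\bm\lambda_n$ with $u_1u_2\cdots u_{n(n-1)}=e$. Then $\operatorname{rot}(\mathsf u)$ also satisfies $\operatorname{rot}(\mathsf u)_1\cdots\operatorname{rot}(\mathsf u)_{n(n-1)}=e$.
   Context: $\widetilde S_n$ is the affine symmetric group (bijections $w:\mathbb Z\to\mathbb Z$ with $w(i+n)=w(i)+n$ and $\sum_{i=1}^nw(i)=\binom{n+1}2$, under composition), with simple reflections $s_i=(\!(i,i+1)\!)$ for $i\in\{0,\dots,n-1\}$, where $(\!(i,j)\!)$ swaps $i+kn$ and $j+kn$ for all $k\in\mathbb Z$. $\bm\lambda_n$ is the word $[s_0,s_1,\dots,s_{n-1}]$ repeated $n-1$ times; its $j$-th letter ($1\le j\le n(n-1)$) is $\sigma_j=s_{(j-1)\bmod n}$ with index in $\{0,\dots,n-1\}$. A subword is a sequence $\mathsf u=[u_1,\dots,u_{n(n-1)}]$ with each $u_j\in\{\sigma_j,e\}$ ($e$ the identity). The rotation $\operatorname{rot}(\mathsf u)$ is the subword whose $j$-th entry is $e$ if and only if the $(j-1)$-th entry of $\mathsf u$ is $e$, with indices taken cyclically modulo $n(n-1)$ (so the first entry of $\operatorname{rot}(\mathsf u)$ is a skip iff $u_{n(n-1)}=e$). *)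

theory Defs
  imports Main
begin

text \<open>Elements of the affine
  symmetric group are represented as functions int => int; the group product is
  function composition and the identity e is id.\<close>
definition srefl :: "nat \<Rightarrow> nat \<Rightarrow> int \<Rightarrow> int" where
  "srefl n i x =
     (if x mod int n = int i mod int n then x + 1
      else if x mod int n = (int i + 1) mod int n then x - 1
      else x)"

definition lam_letter :: "nat \<Rightarrow> nat \<Rightarrow> int \<Rightarrow> int" where
  "lam_letter n j = srefl n ((j - 1) mod n)"

definition is_subword :: "nat \<Rightarrow> (nat \<Rightarrow> int \<Rightarrow> int) \<Rightarrow> bool" where
  "is_subword n u \<longleftrightarrow> (\<forall>j\<in>{1..n*(n-1)}. u j = lam_letter n j \<or> u j = id)"

definition word_prod :: "nat \<Rightarrow> (nat \<Rightarrow> int \<Rightarrow> int) \<Rightarrow> int \<Rightarrow> int" where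
  "word_prod m u = foldr (\<circ>) (map u [1..<m+1]) id"

definition rot :: "nat \<Rightarrow> (nat \<Rightarrow> int \<Rightarrow> int) \<Rightarrow> nat \<Rightarrow> int \<Rightarrow> int" where
  "rot n u j = (let N = n * (n - 1); p = (if j = 1 then N else j - 1)
                in if u p = id then id else lam_letter n j)"

end

theory Submission
  imports Defs
begin

text \<open>Conjugation by the shift \<open>x \<mapsto> x + 1\<close> maps \<open>s\<^sub>i\<close> to \<open>s\<^sub>i\<^sub>+\<^sub>1\<close>, and the letters of
  \<open>\<lambda>\<^sub>n\<close> advance cyclically under it, because \<open>n\<close> divides the length \<open>n(n-1)\<close>.
  Hence \<open>rot(u)\<close> is entrywise the shift-conjugate of \<open>u\<close> read cyclically from its last
  entry, and its product is the shift-conjugate of \<open>u\<^sub>N u\<^sub>1 \<cdots> u\<^sub>N\<^sub>-\<^sub>1\<close>.  That word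
  is the conjugate of \<open>u\<^sub>1 \<cdots> u\<^sub>N = e\<close> by the involution \<open>u\<^sub>N\<close>, so it is \<open>e\<close> too.\<close>

lemma comp_involution_eq_id_commute:
  assumes "f \<circ> g = id" and "g \<circ> g = id"
  shows "g \<circ> f = id"
proof -
  have "g \<circ> f = g \<circ> f \<circ> (g \<circ> g)"
    using assms(2) by simp
  also have "\<dots> = g \<circ> (f \<circ> g) \<circ> g"
    by (simp add: comp_assoc)
  finally show ?thesis
    using assms by simp
qed

definition shift_conj :: "(int \<Rightarrow> int) \<Rightarrow> int \<Rightarrow> int" where
  "shift_conj f x = f (x - 1) + 1"

definition cyclic_pred :: "nat \<Rightarrow> nat \<Rightarrow> nat" where
  "cyclic_pred N j = (if j = 1 then N else j - 1)"

lemma shift_conj_id [simp]: "shift_conj id = id"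
  by (simp add: shift_conj_def fun_eq_iff)

lemma shift_conj_comp: "shift_conj (f \<circ> g) = shift_conj f \<circ> shift_conj g"
  by (simp add: shift_conj_def fun_eq_iff)

lemma shift_conj_foldr_comp:
  "shift_conj (foldr (\<circ>) fs id) = foldr (\<circ>) (map shift_conj fs) id"
proof (induction fs)
  case (Cons f fs)
  have "shift_conj (foldr (\<circ>) (f # fs) id) = shift_conj (f \<circ> foldr (\<circ>) fs id)"
    by simp
  also have "\<dots> = shift_conj f \<circ> foldr (\<circ>) (map shift_conj fs) id"
    by (simp only: shift_conj_comp Cons.IH)
  also have "\<dots> = foldr (\<circ>) (map shift_conj (f # fs)) id"
    by simp
  finally show ?case .
qed (simp add: shift_conj_def fun_eq_iff)

lemma srefl_mod: "srefl n (i mod n) = srefl n i"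
  by (simp add: srefl_def fun_eq_iff of_nat_mod mod_add_left_eq)

lemma mod_diff_one_eq_iff:
  fixes x a m :: int
  shows "(x - 1) mod m = a mod m \<longleftrightarrow> x mod m = (a + 1) mod m"
  unfolding mod_eq_dvd_iff by (simp add: algebra_simps)

lemma shift_conj_srefl: "shift_conj (srefl n i) = srefl n (Suc i)"
proof
  fix x :: int
  show "shift_conj (srefl n i) x = srefl n (Suc i) x"
    unfolding shift_conj_def srefl_def mod_diff_one_eq_iff by (simp add: add.commute[of 1 "int i"])
qed

lemma srefl_involution:
  assumes "n \<noteq> 1"
  shows "srefl n i \<circ> srefl n i = id"
proof
  fix x :: int
  have ne: "(int i + 1) mod int n \<noteq> int i mod int n"
    using assms by (simp add: mod_eq_dvd_iff)
  consider (left) "x mod int n = int i mod int n"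
    | (right) "x mod int n = (int i + 1) mod int n"
    | (fixed) "x mod int n \<noteq> int i mod int n" "x mod int n \<noteq> (int i + 1) mod int n"
    by blast
  then show "(srefl n i \<circ> srefl n i) x = id x"
  proof cases
    case left
    then have "(x + 1) mod int n = (int i + 1) mod int n"
      by (metis mod_add_cong)
    with left ne show ?thesis
      by (simp add: srefl_def)
  next
    case right
    then have "(x - 1) mod int n = int i mod int n"
      by (simp add: mod_diff_one_eq_iff)
    with right ne show ?thesis
      by (simp add: srefl_def)
  qed (simp add: srefl_def)
qed

lemma lam_letter_Suc:
  assumes "j \<noteq> 0"
  shows "lam_letter n (Suc j) = shift_conj (lam_letter n j)"
proof -
  have "j mod n = Suc ((j - 1) mod n) mod n"
    using assms by (simp add: mod_Suc_eq)
  then have "lam_letter n (Suc j) = srefl n (Suc ((j - 1) mod n))"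
    by (simp add: lam_letter_def srefl_mod)
  then show ?thesis
    by (simp add: lam_letter_def shift_conj_srefl)
qed

lemma lam_letter_Suc_multiple: "n dvd m \<Longrightarrow> lam_letter n (Suc m) = lam_letter n 1"
  by (simp add: lam_letter_def)

lemma shift_conj_lam_letter_cyclic_pred:
  assumes "n dvd N" and "j \<in> {1..N}"
  shows "shift_conj (lam_letter n (cyclic_pred N j)) = lam_letter n j"
proof (cases "j = 1")
  case True
  have "N \<noteq> 0"
    using assms(2) by simp
  then have "shift_conj (lam_letter n N) = lam_letter n (Suc N)"
    by (rule lam_letter_Suc[symmetric])
  also have "\<dots> = lam_letter n j"
    using lam_letter_Suc_multiple[OF assms(1)] True by simp
  finally show ?thesis
    using True by (simp add: cyclic_pred_def)
next
  case False
  then have "j - 1 \<noteq> 0"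
    using assms(2) by simp
  then have "shift_conj (lam_letter n (j - 1)) = lam_letter n (Suc (j - 1))"
    by (rule lam_letter_Suc[symmetric])
  then show ?thesis
    using False assms(2) by (simp add: cyclic_pred_def)
qed

lemma is_subword_rot: "is_subword n (rot n u)"
  by (simp add: is_subword_def rot_def Let_def)

lemma rot_eq_shift_conj:
  assumes "is_subword n u" and "j \<in> {1..n * (n - 1)}"
  shows "rot n u j = shift_conj (u (cyclic_pred (n * (n - 1)) j))"
proof -
  define p where "p = cyclic_pred (n * (n - 1)) j"
  have "p \<in> {1..n * (n - 1)}"
    using assms(2) by (auto simp: p_def cyclic_pred_def)
  then have "u p = lam_letter n p \<or> u p = id"
    using assms(1) by (simp add: is_subword_def)
  moreover have "rot n u j = (if u p = id then id else lam_letter n j)"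
    by (simp add: rot_def p_def cyclic_pred_def Let_def)
  moreover have "shift_conj (lam_letter n p) = lam_letter n j"
    using assms(2) by (simp add: p_def shift_conj_lam_letter_cyclic_pred)
  ultimately have "rot n u j = shift_conj (u p)"
    by auto
  then show ?thesis
    by (simp only: p_def)
qed

lemma word_prod_cong:
  "(\<And>j. j \<in> {1..m} \<Longrightarrow> u j = v j) \<Longrightarrow> word_prod m u = word_prod m v"
  unfolding word_prod_def by (intro arg_cong[where f = "\<lambda>fs. foldr (\<circ>) fs id"] map_cong) auto

lemma word_prod_Suc: "word_prod (Suc m) u = word_prod m u \<circ> u (Suc m)"
proof -
  have foldr_start: "foldr (\<circ>) fs g = foldr (\<circ>) fs id \<circ> g" for fs and g :: "int \<Rightarrow> int"
    by (induction fs) (simp_all add: comp_assoc)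
  show ?thesis
    by (simp add: word_prod_def foldr_start[of _ "u (Suc m)"])
qed

lemma word_prod_shift_conj: "word_prod m (shift_conj \<circ> u) = shift_conj (word_prod m u)"
  by (simp add: word_prod_def shift_conj_foldr_comp)

lemma word_prod_cyclic_pred:
  "word_prod (Suc m) (u \<circ> cyclic_pred (Suc m)) = u (Suc m) \<circ> word_prod m u"
proof -
  have "map (cyclic_pred (Suc m)) [1..<Suc m + 1] = Suc m # [1..<Suc m]"
    by (rule nth_equalityI) (auto simp: cyclic_pred_def nth_Cons' simp del: upt_Suc)
  then show ?thesis
    by (simp add: word_prod_def del: upt_Suc flip: map_map)
qed

lemma word_prod_rot:
  assumes "is_subword n u" and N: "n * (n - 1) = Suc m"
  shows "word_prod (Suc m) (rot n u) = shift_conj (u (Suc m) \<circ> word_prod m u)"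
proof -
  have "rot n u j = shift_conj (u (cyclic_pred (Suc m) j))" if "j \<in> {1..Suc m}" for j
    using rot_eq_shift_conj[OF assms(1), of j] that unfolding N .
  then have "word_prod (Suc m) (rot n u) = word_prod (Suc m) (shift_conj \<circ> (u \<circ> cyclic_pred (Suc m)))"
    by (intro word_prod_cong) simp
  then show ?thesis
    by (simp add: word_prod_shift_conj word_prod_cyclic_pred)
qed

lemma is_subword_letter_involution:
  assumes "n \<noteq> 1" and "is_subword n u" and "j \<in> {1..n * (n - 1)}"
  shows "u j \<circ> u j = id"
proof -
  have "u j = lam_letter n j \<or> u j = id"
    using assms(2,3) by (simp add: is_subword_def)
  then show ?thesis
    using assms(1) by (auto simp: lam_letter_def srefl_involution)
qed

theorem lemma5p6:
  fixes n :: nat and u :: "nat \<Rightarrow> int \<Rightarrow> int"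
  assumes "n \<ge> 2"
    and "is_subword n u"
    and "word_prod (n * (n - 1)) u = id"
  shows "is_subword n (rot n u) \<and> word_prod (n * (n - 1)) (rot n u) = id"
proof -
  have "n * (n - 1) \<noteq> 0"
    using assms(1) by simp
  then obtain m where N: "n * (n - 1) = Suc m"
    using not0_implies_Suc by blast
  have "word_prod m u \<circ> u (Suc m) = id"
    using assms(3) unfolding N word_prod_Suc .
  moreover have "u (Suc m) \<circ> u (Suc m) = id"
    using assms(1,2) N by (intro is_subword_letter_involution) auto
  ultimately have "u (Suc m) \<circ> word_prod m u = id"
    by (rule comp_involution_eq_id_commute)
  then have "word_prod (Suc m) (rot n u) = id"
    by (simp add: word_prod_rot[OF assms(2) N])
  then show ?thesis
    unfolding N by (simp add: is_subword_rot)
qed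

end
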